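(* Let $n\ge2$, let $A\in\mathbb R^{n\times n}$ have $A_{i,i+1}=1$ ($i=1,\dots,n-1$) and all other entries $0$, and $b=(0,\dots,0,1)^T$ with entries $b_i$. Let $F_i,\bar F_i,P_i$ ($i=1,\dots,n$) and $Q$ be symmetric $n\times n$ real matrices, $P_{n+1}=0$, $G,\bar G\in\mathbb R^{n\times n}$ with $i$th rows $G_i,\bar G_i$, and $r\in\mathbb R^{1\times n}$, such that for $i=1,\dots,n$ $$\bar F_i = F_i + P_{i+1} - \mathbf LP_i - b_iQ,\qquad \bar G_i = G_i - 2b^TP_i - b_ir.$$ Then $$P_1 = \mathbf X_0^{-1}\Big(\sum_{i=1}^{n-1}\mathbf X_iF_i + \tfrac12 G - \sum_{i=1}^{n-1}\mathbf X_i\bar F_i - \tfrac12\bar G - \tfrac12 br\Big).$$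
   Context: $\mathbf L:\mathbb R^{n\times n}\to\mathbb R^{n\times n}$ is $\mathbf LP=A^TP+PA$, with $\mathbf L^0P=P$, $\mathbf L^{k+1}=\mathbf L\circ\mathbf L^k$. The linear operator $\mathbf X_0:\mathbb R^{n\times n}\to\mathbb R^{n\times n}$ maps $P$ to the matrix whose $k$th row ($k=1,\dots,n$) is the $n$th row of $\mathbf L^{k-1}P$; for $i\ge1$, $\mathbf X_iP=(A^T)^i\mathbf X_0P$. The paper asserts that $\mathbf X_0$ is invertible, and $\mathbf X_0^{-1}$ denotes its inverse. $br$ is the outer product of the column $b$ and the row $r$. *)

theory Defs
  imports "Jordan_Normal_Form.Matrix"
begin

text \<open>All matrices are n x n real matrices of the Jordan_Normal_Form library;
  indices are 0-based, so the paper's row/entry i corresponds to index i-1.\<close>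

definition shiftA :: "nat \<Rightarrow> real mat" where
  "shiftA n = mat n n (\<lambda>(i,j). if j = i + 1 then 1 else 0)"

definition bvec :: "nat \<Rightarrow> real vec" where
  "bvec n = vec n (\<lambda>i. if i = n - 1 then 1 else 0)"

definition Lop :: "real mat \<Rightarrow> real mat \<Rightarrow> real mat" where
  "Lop A P = transpose_mat A * P + P * A"

definition X0op :: "nat \<Rightarrow> real mat \<Rightarrow> real mat \<Rightarrow> real mat" where
  "X0op n A P = mat n n (\<lambda>(k,j). ((Lop A ^^ k) P) $$ (n - 1, j))"

definition Xop :: "nat \<Rightarrow> real mat \<Rightarrow> nat \<Rightarrow> real mat \<Rightarrow> real mat" where
  "Xop n A i P = (transpose_mat A ^\<^sub>m i) * X0op n A P"

definition X0inv :: "nat \<Rightarrow> real mat \<Rightarrow> real mat \<Rightarrow> real mat" where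
  "X0inv n A = the_inv_into (carrier_mat n n) (X0op n A)"

definition msum :: "nat \<Rightarrow> (nat \<Rightarrow> real mat) \<Rightarrow> nat set \<Rightarrow> real mat" where
  "msum n f I = mat n n (\<lambda>(i,j). \<Sum>k\<in>I. f k $$ (i,j))"

definition outer :: "real vec \<Rightarrow> real vec \<Rightarrow> real mat" where
  "outer b r = mat (dim_vec b) (dim_vec r) (\<lambda>(i,j). b $ i * r $ j)"

definition symm_mat :: "nat \<Rightarrow> real mat \<Rightarrow> bool" where
  "symm_mat n M \<longleftrightarrow> M \<in> carrier_mat n n \<and> transpose_mat M = M"

end

theory Submission
  imports Defs
begin

text \<open>Write \<open>F\<^sub>i'\<close>, \<open>G'\<close> for the barred matrices. Since \<open>b\<^sub>i = 0\<close> for \<open>i < n\<close>, the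
  hypotheses give \<open>F\<^sub>i - F\<^sub>i' = L P\<^sub>i - P\<^sub>i\<^sub>+\<^sub>1\<close> for \<open>i < n\<close>. Counting rows from 0, row \<open>k\<close>
  of \<open>X\<^sub>i M\<close> is the last row of \<open>L\<^bsup>k-i\<^esup> M\<close> (and zero for \<open>k < i\<close>), so row \<open>k\<close> of
  \<open>\<Sum>\<^sub>i X\<^sub>i (F\<^sub>i - F\<^sub>i')\<close> telescopes to the last row of \<open>L\<^sup>k P\<^sub>1\<close> minus the last row of
  \<open>P\<^sub>k\<^sub>+\<^sub>1\<close>, and the latter is cancelled by row \<open>k\<close> of \<open>(G - G' - b r)/2\<close>. Hence the argument
  of \<open>X\<^sub>0\<^sup>-\<^sup>1\<close> is \<open>X\<^sub>0 P\<^sub>1\<close>. Finally \<open>X\<^sub>0\<close> is injective: \<open>A\<^sup>T\<close> shifts rows down and \<open>A\<close>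
  shifts columns right, so if the last row of \<open>L\<^sup>k D\<close> vanishes for all \<open>k < n\<close>, the rows of
  \<open>D\<close> vanish one after the other from the bottom. The symmetry hypotheses only serve to fix the
  dimensions.\<close>

lemma shiftA_carrier [simp]: "shiftA n \<in> carrier_mat n n"
  by (simp add: shiftA_def)

lemma shiftA_dims [simp]: "dim_row (shiftA n) = n" "dim_col (shiftA n) = n"
  by (simp_all add: shiftA_def)

lemma transpose_shiftA_mult_index:
  assumes "X \<in> carrier_mat n m" "k < n" "j < m"
  shows "(transpose_mat (shiftA n) * X) $$ (k, j) = (if 0 < k then X $$ (k - 1, j) else 0)"
proof -
  have "(transpose_mat (shiftA n) * X) $$ (k, j) = (\<Sum>l<n. if l = k - 1 \<and> 0 < k then X $$ (l, j) else 0)"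
    using assms by (auto simp: shiftA_def scalar_prod_def lessThan_atLeast0 intro!: sum.cong)
  also have "\<dots> = (if 0 < k then X $$ (k - 1, j) else 0)"
    using assms by (auto simp: sum.If_cases)
  finally show ?thesis .
qed

lemma mult_shiftA_index:
  assumes "X \<in> carrier_mat m n" "k < m" "j < n"
  shows "(X * shiftA n) $$ (k, j) = (if 0 < j then X $$ (k, j - 1) else 0)"
proof -
  have "(X * shiftA n) $$ (k, j) = (\<Sum>l<n. if l = j - 1 \<and> 0 < j then X $$ (k, l) else 0)"
    using assms by (auto simp: shiftA_def scalar_prod_def lessThan_atLeast0 intro!: sum.cong)
  also have "\<dots> = (if 0 < j then X $$ (k, j - 1) else 0)"
    using assms by (auto simp: sum.If_cases)
  finally show ?thesis .
qed

lemma transpose_shiftA_pow_mult_index: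
  assumes "X \<in> carrier_mat n m" "k < n" "j < m"
  shows "(transpose_mat (shiftA n) ^\<^sub>m i * X) $$ (k, j) = (if i \<le> k then X $$ (k - i, j) else 0)"
  using assms
proof (induction i arbitrary: X k)
  case 0
  then show ?case by simp
next
  case (Suc i)
  let ?T = "transpose_mat (shiftA n)"
  have "?T ^\<^sub>m Suc i * X = ?T ^\<^sub>m i * (?T * X)"
    using Suc.prems(1) by (simp add: assoc_mult_mat[of _ n n _ n])
  also have "\<dots> $$ (k, j) = (if i \<le> k then (?T * X) $$ (k - i, j) else 0)"
    using Suc by (simp add: mult_carrier_mat[of _ n n])
  also have "\<dots> = (if Suc i \<le> k then X $$ (k - Suc i, j) else 0)"
    using Suc.prems by (auto simp: transpose_shiftA_mult_index[OF Suc.prems(1)] simp del: index_mult_mat(1))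
  finally show ?case .
qed

lemma Lop_shiftA_index:
  assumes "M \<in> carrier_mat n n" "i < n" "j < n"
  shows "Lop (shiftA n) M $$ (i, j)
    = (if 0 < i then M $$ (i - 1, j) else 0) + (if 0 < j then M $$ (i, j - 1) else 0)"
  using assms
  by (simp add: Lop_def transpose_shiftA_mult_index mult_shiftA_index del: index_mult_mat(1))

lemma Lop_dims [simp]: "dim_row (Lop A M) = dim_row M" "dim_col (Lop A M) = dim_col A"
  by (simp_all add: Lop_def)

lemma Lop_carrier [simp]:
  "A \<in> carrier_mat n n \<Longrightarrow> M \<in> carrier_mat n n \<Longrightarrow> Lop A M \<in> carrier_mat n n"
  by (intro carrier_matI) simp_all

lemma Lop_pow_carrier [simp]:
  "A \<in> carrier_mat n n \<Longrightarrow> M \<in> carrier_mat n n \<Longrightarrow> (Lop A ^^ m) M \<in> carrier_mat n n"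
  by (induction m) auto

lemma Lop_pow_dims [simp]:
  assumes "A \<in> carrier_mat n n" "M \<in> carrier_mat n n"
  shows "dim_row ((Lop A ^^ m) M) = n" "dim_col ((Lop A ^^ m) M) = n"
  using Lop_pow_carrier[OF assms] by auto

lemma Lop_diff:
  assumes "A \<in> carrier_mat n n" "X \<in> carrier_mat n n" "Y \<in> carrier_mat n n"
  shows "Lop A (X - Y) = Lop A X - Lop A Y"
proof -
  have "Lop A (X - Y) = (transpose_mat A * X - transpose_mat A * Y) + (X * A - Y * A)"
    using assms by (simp add: Lop_def mult_minus_distrib_mat minus_mult_distrib_mat)
  also have "\<dots> = Lop A X - Lop A Y"
    using assms unfolding Lop_def by (intro eq_matI) auto
  finally show ?thesis .
qed

lemma Lop_pow_diff:
  assumes "A \<in> carrier_mat n n" "X \<in> carrier_mat n n" "Y \<in> carrier_mat n n"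
  shows "(Lop A ^^ m) (X - Y) = (Lop A ^^ m) X - (Lop A ^^ m) Y"
  by (induction m) (use assms in \<open>simp_all add: Lop_diff\<close>)

lemma X0op_carrier [simp]: "X0op n A P \<in> carrier_mat n n"
  by (simp add: X0op_def)

lemma X0op_diff:
  assumes "A \<in> carrier_mat n n" "X \<in> carrier_mat n n" "Y \<in> carrier_mat n n"
  shows "X0op n A (X - Y) = X0op n A X - X0op n A Y"
proof (rule eq_matI)
  fix k j assume "k < dim_row (X0op n A X - X0op n A Y)" "j < dim_col (X0op n A X - X0op n A Y)"
  then have "k < n" "j < n" by (simp_all add: X0op_def)
  then show "X0op n A (X - Y) $$ (k, j) = (X0op n A X - X0op n A Y) $$ (k, j)"
    using assms by (simp add: X0op_def Lop_pow_diff)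
qed (simp_all add: X0op_def)

lemma Xop_diff:
  assumes "A \<in> carrier_mat n n" "X \<in> carrier_mat n n" "Y \<in> carrier_mat n n"
  shows "Xop n A i (X - Y) = Xop n A i X - Xop n A i Y"
  unfolding Xop_def X0op_diff[OF assms] using assms
  by (intro mult_minus_distrib_mat[of _ n n _ n]) auto

lemma Xop_dims [simp]: "dim_row (Xop n A i M) = dim_col A" "dim_col (Xop n A i M) = n"
  by (simp_all add: Xop_def X0op_def)

lemma Xop_shiftA_index:
  assumes "k < n" "j < n"
  shows "Xop n (shiftA n) i M $$ (k, j)
    = (if i \<le> k then ((Lop (shiftA n) ^^ (k - i)) M) $$ (n - 1, j) else 0)"
  using assms by (simp add: Xop_def transpose_shiftA_pow_mult_index[OF X0op_carrier]) (simp add: X0op_def)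

lemma Lop_shiftA_pow_lower_rows:
  assumes D: "D \<in> carrier_mat n n" and "s + m \<le> i" "i < n" "j < n"
    and zero: "\<And>i j. s < i \<Longrightarrow> i < n \<Longrightarrow> j < n \<Longrightarrow> D $$ (i, j) = 0"
  shows "((Lop (shiftA n) ^^ m) D) $$ (i, j) = (if i = s + m then D $$ (s, j) else 0)"
  using assms(2-4)
proof (induction m arbitrary: i j)
  case 0
  then show ?case using zero by simp
next
  case (Suc m)
  have "(Lop (shiftA n) ^^ Suc m) D $$ (i, j)
      = ((Lop (shiftA n) ^^ m) D) $$ (i - 1, j) + (if 0 < j then ((Lop (shiftA n) ^^ m) D) $$ (i, j - 1) else 0)"
    using Suc.prems D by (simp add: Lop_shiftA_index)
  also have "\<dots> = (if i = s + Suc m then D $$ (s, j) else 0)"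
    using Suc.IH[of "i - 1" j] Suc.IH[of i "j - 1"] Suc.prems by auto
  finally show ?case .
qed

lemma X0op_shiftA_eq_0_imp_eq_0:
  assumes D: "D \<in> carrier_mat n n" and X0: "X0op n (shiftA n) D = 0\<^sub>m n n"
  shows "D = 0\<^sub>m n n"
proof -
  have bottom_rows: "D $$ (i, j) = 0" if "t \<le> n" "n - t \<le> i" "i < n" "j < n" for t i j
    using that
  proof (induction t arbitrary: i j)
    case 0
    then show ?case by simp
  next
    case (Suc t)
    define s where "s = n - Suc t"
    have below: "D $$ (i, j) = 0" if "s < i" "i < n" "j < n" for i j
      using Suc.IH that Suc.prems(1) by (simp add: s_def)
    have "s + t = n - 1" "n - 1 < n"
      using Suc.prems by (auto simp: s_def)
    then have "D $$ (s, j) = ((Lop (shiftA n) ^^ t) D) $$ (n - 1, j)"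
      using Lop_shiftA_pow_lower_rows[of D n s t "n - 1" j] D below \<open>j < n\<close> by simp
    also have "\<dots> = X0op n (shiftA n) D $$ (t, j)"
      using Suc.prems by (simp add: X0op_def)
    finally have "D $$ (s, j) = 0"
      using X0 Suc.prems by simp
    then show ?case
      using below Suc.prems by (cases "i = s") (auto simp: s_def)
  qed
  show ?thesis
    using D bottom_rows[of n] by (intro eq_matI) auto
qed

lemma inj_on_X0op_shiftA: "inj_on (X0op n (shiftA n)) (carrier_mat n n)"
proof (rule inj_onI)
  fix X Y assume X: "X \<in> carrier_mat n n" and Y: "Y \<in> carrier_mat n n"
    and eq: "X0op n (shiftA n) X = X0op n (shiftA n) Y"
  have "X0op n (shiftA n) (X - Y) = X0op n (shiftA n) Y - X0op n (shiftA n) Y"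
    using X0op_diff[OF shiftA_carrier X Y] eq by simp
  also have "\<dots> = 0\<^sub>m n n"
    by (rule minus_r_inv_mat[OF X0op_carrier])
  finally have diff: "X - Y = 0\<^sub>m n n"
    by (rule X0op_shiftA_eq_0_imp_eq_0[OF minus_carrier_mat[OF Y]])
  show "X = Y"
  proof (rule eq_matI)
    fix i j assume ij: "i < dim_row Y" "j < dim_col Y"
    have "X $$ (i, j) - Y $$ (i, j) = (X - Y) $$ (i, j)"
      using ij by simp
    then show "X $$ (i, j) = Y $$ (i, j)"
      using diff ij Y by simp
  qed (use X Y in simp_all)
qed

lemma X0inv_X0op_shiftA:
  "M \<in> carrier_mat n n \<Longrightarrow> X0inv n (shiftA n) (X0op n (shiftA n) M) = M"
  unfolding X0inv_def by (rule the_inv_into_f_f[OF inj_on_X0op_shiftA])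

lemma sum_Xop_shiftA_Lop_telescope:
  assumes P: "\<And>i. i \<in> {1..n} \<Longrightarrow> P i \<in> carrier_mat n n" and kj: "k < n" "j < n"
  shows "(\<Sum>i\<in>{1..n-1}. Xop n (shiftA n) i (Lop (shiftA n) (P i) - P (i + 1)) $$ (k, j))
    = X0op n (shiftA n) (P 1) $$ (k, j) - P (k + 1) $$ (n - 1, j)"
proof -
  let ?L = "Lop (shiftA n)"
  define g where "g i = ((?L ^^ (k + 1 - i)) (P i)) $$ (n - 1, j)" for i
  have summand: "Xop n (shiftA n) i (?L (P i) - P (i + 1)) $$ (k, j)
      = (if i \<le> k then g i - g (Suc i) else 0)" if "i \<in> {1..n-1}" for i
  proof (cases "i \<le> k")
    case True
    have Pi: "P i \<in> carrier_mat n n" "P (i + 1) \<in> carrier_mat n n"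
      using that P by auto
    have "Xop n (shiftA n) i (?L (P i) - P (i + 1)) $$ (k, j)
        = ((?L ^^ (k - i)) (?L (P i) - P (i + 1))) $$ (n - 1, j)"
      using True kj by (simp add: Xop_shiftA_index)
    also have "\<dots> = ((?L ^^ (k - i)) (?L (P i))) $$ (n - 1, j) - ((?L ^^ (k - i)) (P (i + 1))) $$ (n - 1, j)"
    proof -
      have "(?L ^^ (k - i)) (?L (P i)) \<in> carrier_mat n n" "(?L ^^ (k - i)) (P (i + 1)) \<in> carrier_mat n n"
        using Pi by simp_all
      then show ?thesis
        using kj by (subst Lop_pow_diff[OF shiftA_carrier Lop_carrier[OF shiftA_carrier Pi(1)] Pi(2)])
          (simp_all add: carrier_matD)
    qed
    also have "(?L ^^ (k - i)) (?L (P i)) = (?L ^^ (k + 1 - i)) (P i)"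
      using True by (simp add: Suc_diff_le funpow_Suc_right del: funpow.simps)
    finally show ?thesis
      using True by (simp add: g_def)
  next
    case False
    then show ?thesis
      using kj by (simp add: Xop_shiftA_index)
  qed
  have "(\<Sum>i\<in>{1..n-1}. Xop n (shiftA n) i (?L (P i) - P (i + 1)) $$ (k, j))
      = (\<Sum>i\<in>{1..n-1}. if i \<le> k then g i - g (Suc i) else 0)"
    by (intro sum.cong refl summand)
  also have "\<dots> = (\<Sum>i\<in>{1..n-1} \<inter> {i. i \<le> k}. g i - g (Suc i))"
    by (simp add: sum.inter_restrict)
  also have "{1..n-1} \<inter> {i. i \<le> k} = {1..k}"
    using kj by auto
  also have "(\<Sum>i\<in>{1..k}. g i - g (Suc i)) = - (\<Sum>i\<in>{1..k}. g (Suc i) - g i)"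
    by (simp add: sum_negf[symmetric])
  also have "\<dots> = g 1 - g (Suc k)"
    by (simp add: sum_Suc_diff)
  finally show ?thesis
    using kj by (simp add: g_def X0op_def)
qed

lemma dim_bvec [simp]: "dim_vec (bvec n) = n"
  by (simp add: bvec_def)

lemma transpose_mult_bvec_index:
  "M \<in> carrier_mat n n \<Longrightarrow> j < n \<Longrightarrow> (transpose_mat M *\<^sub>v bvec n) $ j = M $$ (n - 1, j)"
  by (simp add: bvec_def flip: unit_vec_def)

lemma index_diff_of_row_eq:
  assumes "G \<in> carrier_mat n n" "Gb \<in> carrier_mat n n" "r \<in> carrier_vec n" "M \<in> carrier_mat n n"
    and "k < n" "j < n"
    and row_eq: "row Gb k = row G k - 2 \<cdot>\<^sub>v (transpose_mat M *\<^sub>v bvec n) - c \<cdot>\<^sub>v r"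
  shows "G $$ (k, j) - Gb $$ (k, j) = 2 * M $$ (n - 1, j) + c * r $ j"
proof -
  have "Gb $$ (k, j) = row Gb k $ j"
    using assms(2,5,6) by simp
  also have "\<dots> = G $$ (k, j) - 2 * M $$ (n - 1, j) - c * r $ j"
    using assms transpose_mult_bvec_index[of M n j] by simp
  finally show ?thesis
    by simp
qed

lemma X0op_shiftA_eq_of_differences:
  fixes F Fb P :: "nat \<Rightarrow> real mat"
  assumes P: "\<And>i. i \<in> {1..n} \<Longrightarrow> P i \<in> carrier_mat n n"
    and F: "\<And>i. i \<in> {1..n-1} \<Longrightarrow> F i \<in> carrier_mat n n"
    and Fb: "\<And>i. i \<in> {1..n-1} \<Longrightarrow> Fb i \<in> carrier_mat n n"
    and F_diff: "\<And>i. i \<in> {1..n-1} \<Longrightarrow> F i - Fb i = Lop (shiftA n) (P i) - P (i + 1)"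
    and G: "G \<in> carrier_mat n n" "Gb \<in> carrier_mat n n" and r: "r \<in> carrier_vec n"
    and G_diff: "\<And>k j. k < n \<Longrightarrow> j < n \<Longrightarrow>
      G $$ (k, j) - Gb $$ (k, j) = 2 * P (k + 1) $$ (n - 1, j) + bvec n $ k * r $ j"
  shows "msum n (\<lambda>i. Xop n (shiftA n) i (F i)) {1..n-1} + (1/2) \<cdot>\<^sub>m G
    - msum n (\<lambda>i. Xop n (shiftA n) i (Fb i)) {1..n-1} - (1/2) \<cdot>\<^sub>m Gb
    - (1/2) \<cdot>\<^sub>m outer (bvec n) r = X0op n (shiftA n) (P 1)"
    (is "?M = _")
proof (rule eq_matI)
  let ?X = "Xop n (shiftA n)"
  fix k j assume "k < dim_row (X0op n (shiftA n) (P 1))" "j < dim_col (X0op n (shiftA n) (P 1))"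
  then have kj: "k < n" "j < n"
    by (simp_all add: X0op_def)
  have summand: "?X i (F i) $$ (k, j) - ?X i (Fb i) $$ (k, j) = ?X i (Lop (shiftA n) (P i) - P (i + 1)) $$ (k, j)"
    if "i \<in> {1..n-1}" for i
    using Xop_diff[OF shiftA_carrier F[OF that] Fb[OF that], of i] F_diff[OF that] kj by simp
  have "?M $$ (k, j) = (\<Sum>i\<in>{1..n-1}. ?X i (F i) $$ (k, j) - ?X i (Fb i) $$ (k, j))
      + (G $$ (k, j) - Gb $$ (k, j) - bvec n $ k * r $ j) / 2"
    using kj G r by (simp add: msum_def outer_def sum_subtractf field_simps)
  also have "\<dots> = (\<Sum>i\<in>{1..n-1}. ?X i (Lop (shiftA n) (P i) - P (i + 1)) $$ (k, j)) + P (k + 1) $$ (n - 1, j)"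
    using sum.cong[OF refl, of "{1..n-1}", OF summand] G_diff[OF kj] by simp
  also have "\<dots> = X0op n (shiftA n) (P 1) $$ (k, j)"
    using sum_Xop_shiftA_Lop_telescope[where P = P, OF P kj] by simp
  finally show "?M $$ (k, j) = X0op n (shiftA n) (P 1) $$ (k, j)" .
qed (use r in \<open>simp_all add: X0op_def outer_def\<close>)

theorem theorem3p6:
  fixes n :: nat
    and F Fb P :: "nat \<Rightarrow> real mat"
    and Q G Gb :: "real mat"
    and r :: "real vec"
  assumes n2: "n \<ge> 2"
    and symF: "\<forall>i\<in>{1..n}. symm_mat n (F i)"
    and symFb: "\<forall>i\<in>{1..n}. symm_mat n (Fb i)"
    and symP: "\<forall>i\<in>{1..n}. symm_mat n (P i)"
    and symQ: "symm_mat n Q"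
    and Pn1: "P (n + 1) = 0\<^sub>m n n"
    and G: "G \<in> carrier_mat n n"
    and Gb: "Gb \<in> carrier_mat n n"
    and r: "r \<in> carrier_vec n"
    and eqF: "\<forall>i\<in>{1..n}. Fb i = F i + P (i + 1) - Lop (shiftA n) (P i)
                                 - (bvec n $ (i - 1)) \<cdot>\<^sub>m Q"
    and eqG: "\<forall>i\<in>{1..n}. row Gb (i - 1) = row G (i - 1)
                 - 2 \<cdot>\<^sub>v (transpose_mat (P i) *\<^sub>v bvec n) - (bvec n $ (i - 1)) \<cdot>\<^sub>v r"
  shows "P 1 = X0inv n (shiftA n)
            (msum n (\<lambda>i. Xop n (shiftA n) i (F i)) {1..n-1} + (1/2) \<cdot>\<^sub>m G
             - msum n (\<lambda>i. Xop n (shiftA n) i (Fb i)) {1..n-1} - (1/2) \<cdot>\<^sub>m Gb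
             - (1/2) \<cdot>\<^sub>m outer (bvec n) r)"
proof -
  have P: "P i \<in> carrier_mat n n" if "i \<in> {1..n}" for i
    using that symP by (simp add: symm_mat_def)
  have F: "F i \<in> carrier_mat n n" "Fb i \<in> carrier_mat n n" if "i \<in> {1..n-1}" for i
    using that symF symFb by (auto simp: symm_mat_def)
  have Q: "Q \<in> carrier_mat n n"
    using symQ by (simp add: symm_mat_def)
  have F_diff: "F i - Fb i = Lop (shiftA n) (P i) - P (i + 1)" if i: "i \<in> {1..n-1}" for i
  proof -
    have "Fb i = F i + P (i + 1) - Lop (shiftA n) (P i) - 0 \<cdot>\<^sub>m Q"
      using eqF i by (auto simp: bvec_def)
    moreover have "P i \<in> carrier_mat n n" "P (i + 1) \<in> carrier_mat n n" "F i \<in> carrier_mat n n"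
      using i by (auto intro: P F(1))
    ultimately show ?thesis
      using Q by (intro eq_matI) auto
  qed
  have G_diff: "G $$ (k, j) - Gb $$ (k, j) = 2 * P (k + 1) $$ (n - 1, j) + bvec n $ k * r $ j"
    if "k < n" "j < n" for k j
    using that eqG[rule_format, of "k + 1"] by (intro index_diff_of_row_eq[OF G Gb r]) (auto intro: P)
  have "P 1 \<in> carrier_mat n n"
    using P n2 by simp
  then show ?thesis
    using X0op_shiftA_eq_of_differences[where P = P and F = F and Fb = Fb, OF P F(1) F(2) F_diff G Gb r G_diff]
    by (simp add: X0inv_X0op_shiftA)
qed

end
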